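(* Let $\kappa > 0$ and let $(X,d)$ be a complete CAT$(\kappa)$ space such that $d(v,w) < \pi/(2\sqrt{\kappa})$ for all $v,w \in X$, and let $f : X \to (-\infty,\infty]$ be a proper, convex and lower semi-continuous function. Let $x \in X$ and suppose there is a sequence of positive real numbers $(\lambda_n)$ with $\lim_{n\to\infty}\lambda_n = \infty$ such that \[ \limsup_{n \to \infty} d(x, J_{\lambda_n} x) < \pi/(2\sqrt{\kappa}). \] Then $(J_\lambda x)_{\lambda > 0}$ converges to a minimum point of $f$ as $\lambda \to \infty$.
   Context: A CAT$(\kappa)$ space ($\kappa>0$) is a metric space in which any two points at distance $<\pi/\sqrt{\kappa}$ are joined by a geodesic and every geodesic triangle of perimeter $<2\pi/\sqrt{\kappa}$ satisfies the CAT$(\kappa)$ comparison inequality with respect to its comparison triangle in the sphere of constant curvature $\kappa$. Writing $(1-t)x+ty$ for the point at distance $t\,d(x,y)$ from $x$ on the geodesic from $x$ to $y$, $f$ is convex if $f((1-t)x+ty) \le (1-t)f(x)+tf(y)$ for all $x,y$, $t\in[0,1]$; proper means not identically $\infty$. For $x \in X$, $\Psi_x : X \to [0,\infty)$ is $\Psi_x(y) = \frac{1}{\kappa\cos(\sqrt{\kappa}\,d(y,x))} - \frac{\cos(\sqrt{\kappa}\,d(y,x))}{\kappa}$, and for $\lambda > 0$ the resolvent is $J_\lambda x = J^f_\lambda(x) = \operatorname{argmin}_{y \in X}\left[f(y) + \frac{1}{\lambda}\Psi_x(y)\right]$, which exists and is unique under the stated assumptions. *)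

theory Defs
  imports "HOL-Analysis.Analysis"
begin

definition geodesic_in :: "'a set \<Rightarrow> ('a \<Rightarrow> 'a \<Rightarrow> real) \<Rightarrow> (real \<Rightarrow> 'a) \<Rightarrow> 'a \<Rightarrow> 'a \<Rightarrow> bool" where
  "geodesic_in S d g x y \<longleftrightarrow>
     g 0 = x \<and> g (d x y) = y \<and> g ` {0..d x y} \<subseteq> S \<and>
     (\<forall>s\<in>{0..d x y}. \<forall>t\<in>{0..d x y}. d (g s) (g t) = \<bar>s - t\<bar>)"

text \<open>Model space of constant curvature kappa > 0: the sphere of radius 1/sqrt kappa in R^3
  with its intrinsic (great-circle) metric.\<close>
definition model_sphere :: "real \<Rightarrow> (real^3) set" where
  "model_sphere \<kappa> = {v. norm v = 1 / sqrt \<kappa>}"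

definition model_dist :: "real \<Rightarrow> real^3 \<Rightarrow> real^3 \<Rightarrow> real" where
  "model_dist \<kappa> u v = arccos (\<kappa> * (u \<bullet> v)) / sqrt \<kappa>"

definition side_comparison ::
  "real \<Rightarrow> (real \<Rightarrow> 'a::metric_space) \<Rightarrow> (real \<Rightarrow> real^3) \<Rightarrow> real \<Rightarrow>
   (real \<Rightarrow> 'a) \<Rightarrow> (real \<Rightarrow> real^3) \<Rightarrow> real \<Rightarrow> bool" where
  "side_comparison \<kappa> g h a g' h' b \<longleftrightarrow>
     (\<forall>s\<in>{0..a}. \<forall>t\<in>{0..b}. dist (g s) (g' t) \<le> model_dist \<kappa> (h s) (h' t))"

text \<open>CAT(kappa) space (the whole type is the space X).\<close>
definition CAT :: "real \<Rightarrow> 'a::metric_space itself \<Rightarrow> bool" where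
  "CAT \<kappa> _ \<longleftrightarrow>
     (\<forall>x y::'a. dist x y < pi / sqrt \<kappa> \<longrightarrow> (\<exists>g. geodesic_in UNIV dist g x y)) \<and>
     (\<forall>(p::'a) q r g1 g2 g3.
        geodesic_in UNIV dist g1 p q \<and> geodesic_in UNIV dist g2 q r \<and> geodesic_in UNIV dist g3 r p \<and>
        dist p q + dist q r + dist r p < 2 * pi / sqrt \<kappa> \<longrightarrow>
        (\<forall>p' q' r' h1 h2 h3.
           p' \<in> model_sphere \<kappa> \<and> q' \<in> model_sphere \<kappa> \<and> r' \<in> model_sphere \<kappa> \<and>
           model_dist \<kappa> p' q' = dist p q \<and> model_dist \<kappa> q' r' = dist q r \<and>
           model_dist \<kappa> r' p' = dist r p \<and>
           geodesic_in (model_sphere \<kappa>) (model_dist \<kappa>) h1 p' q' \<and>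
           geodesic_in (model_sphere \<kappa>) (model_dist \<kappa>) h2 q' r' \<and>
           geodesic_in (model_sphere \<kappa>) (model_dist \<kappa>) h3 r' p' \<longrightarrow>
           side_comparison \<kappa> g1 h1 (dist p q) g2 h2 (dist q r) \<and>
           side_comparison \<kappa> g2 h2 (dist q r) g3 h3 (dist r p) \<and>
           side_comparison \<kappa> g3 h3 (dist r p) g1 h1 (dist p q)))"

definition geod_convex :: "('a::metric_space \<Rightarrow> ereal) \<Rightarrow> bool" where
  "geod_convex f \<longleftrightarrow>
     (\<forall>x y g t. geodesic_in UNIV dist g x y \<and> t \<in> {0..1} \<longrightarrow>
        f (g (t * dist x y)) \<le> ereal (1 - t) * f x + ereal t * f y)"

definition proper_fun :: "('a \<Rightarrow> ereal) \<Rightarrow> bool" where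
  "proper_fun f \<longleftrightarrow> (\<forall>x. f x \<noteq> -\<infinity>) \<and> (\<exists>x. f x \<noteq> \<infinity>)"

definition lsc :: "('a::topological_space \<Rightarrow> ereal) \<Rightarrow> bool" where
  "lsc f \<longleftrightarrow> (\<forall>x. f x \<le> Liminf (at x) f)"

definition Psi :: "real \<Rightarrow> 'a::metric_space \<Rightarrow> 'a \<Rightarrow> real" where
  "Psi \<kappa> x y = 1 / (\<kappa> * cos (sqrt \<kappa> * dist y x)) - cos (sqrt \<kappa> * dist y x) / \<kappa>"

definition resolvent :: "real \<Rightarrow> ('a::metric_space \<Rightarrow> ereal) \<Rightarrow> real \<Rightarrow> 'a \<Rightarrow> 'a" where
  "resolvent \<kappa> f lam x =
     (THE y. \<forall>z. f y + ereal (Psi \<kappa> x y / lam) \<le> f z + ereal (Psi \<kappa> x z / lam))"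

end

theory Submission
  imports Defs
begin

text \<open>Write J l for the resolvent of f at x with parameter l. Comparing the minimality of
  J l and J m shows that l \<mapsto> Psi x (J l) is nondecreasing and l \<mapsto> f (J l) nonincreasing.
  The CAT(\<kappa>) comparison with a spherical triangle makes Psi x uniformly convex along geodesic
  midpoints, with a gap depending only on the distance between the endpoints. For l \<le> m the
  midpoint of J l and J m is a competitor for J l with no larger value of f, so the gap is at
  most half the increment Psi x (J m) - Psi x (J l). The limsup hypothesis bounds Psi x (J l);
  being monotone it converges, so J l is Cauchy as l \<rightarrow> \<infinity>, and its limit minimises f by lower
  semicontinuity, since f (J l) \<le> f w + Psi x w / l. The same midpoint gap, together with
  completeness, shows that the resolvent is well defined.\<close>

lemma model_sphere_inner_self:
  assumes "\<kappa> > 0" "u \<in> model_sphere \<kappa>"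
  shows "inner u u = 1 / \<kappa>"
proof -
  have "(norm u)\<^sup>2 = 1 / \<kappa>" using assms by (simp add: model_sphere_def power_divide)
  thus ?thesis by (simp add: power2_norm_eq_inner)
qed

lemma in_model_sphereI:
  assumes "\<kappa> > 0" "inner u u = 1 / \<kappa>"
  shows "u \<in> model_sphere \<kappa>"
  using assms by (simp add: model_sphere_def norm_eq_sqrt_inner real_sqrt_divide)

lemma model_sphere_inner_bound:
  assumes "\<kappa> > 0" "u \<in> model_sphere \<kappa>" "v \<in> model_sphere \<kappa>"
  shows "\<bar>\<kappa> * inner u v\<bar> \<le> 1"
proof -
  have "\<bar>inner u v\<bar> \<le> norm u * norm v" by (rule Cauchy_Schwarz_ineq2)
  also have "\<dots> = 1 / \<kappa>" using assms by (simp add: model_sphere_def)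
  finally show ?thesis using assms by (simp add: abs_mult field_simps)
qed

lemma cos_model_dist:
  assumes "\<kappa> > 0" "u \<in> model_sphere \<kappa>" "v \<in> model_sphere \<kappa>"
  shows "cos (sqrt \<kappa> * model_dist \<kappa> u v) = \<kappa> * inner u v"
  using assms model_sphere_inner_bound[OF assms] by (simp add: model_dist_def cos_arccos_abs)

lemma model_dist_eqI:
  assumes "\<kappa> > 0" "0 \<le> t" "sqrt \<kappa> * t \<le> pi" "\<kappa> * inner u v = cos (sqrt \<kappa> * t)"
  shows "model_dist \<kappa> u v = t"
  using assms arccos_cos[of "sqrt \<kappa> * t"] by (simp add: model_dist_def)

lemma inner_orthonormal_circle:
  fixes e e' :: "'a::real_inner"
  assumes "inner e e = 1" "inner e' e' = 1" "inner e e' = 0"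
  shows "inner (cos a *\<^sub>R e + sin a *\<^sub>R e') (cos b *\<^sub>R e + sin b *\<^sub>R e') = cos (a - b)"
  using assms by (simp add: inner_add_left inner_add_right inner_commute cos_diff)

text \<open>The great circle through non-antipodal points, parametrised by arc length.\<close>
lemma model_geodesic_exists:
  assumes \<kappa>: "\<kappa> > 0" and u: "u \<in> model_sphere \<kappa>" and v: "v \<in> model_sphere \<kappa>"
    and not_antipodal: "-1 < \<kappa> * inner u v"
  shows "\<exists>h. geodesic_in (model_sphere \<kappa>) (model_dist \<kappa>) h u v"
proof (cases "u = v")
  case True
  have "model_dist \<kappa> u u = 0"
    using model_sphere_inner_self[OF \<kappa> u] \<kappa> by (simp add: model_dist_def)
  thus ?thesis using True u unfolding geodesic_in_def by (intro exI[of _ "\<lambda>s. u"]) auto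
next
  case False
  define S where "S = sqrt \<kappa>"
  have S: "S > 0" "S * S = \<kappa>" using \<kappa> by (auto simp: S_def)
  define c where "c = \<kappa> * inner u v"
  define th where "th = arccos c"
  have uu: "inner u u = 1/\<kappa>" and vv: "inner v v = 1/\<kappa>" using model_sphere_inner_self \<kappa> u v by auto
  have "0 < inner (u - v) (u - v)" using False by simp
  hence "inner u v < 1/\<kappa>" using uu vv by (simp add: inner_diff_left inner_diff_right inner_commute)
  hence c1: "c < 1" using \<kappa> by (simp add: c_def field_simps)
  have c0: "-1 < c" using not_antipodal c_def by simp
  have thr: "0 < th" "th \<le> pi" using c0 c1 by (auto simp: th_def arccos_lt_bounded less_imp_le)
  have costh: "cos th = c" using c0 c1 by (simp add: th_def)
  have sin2: "(sin th)\<^sup>2 = 1 - c\<^sup>2" using costh by (simp add: sin_squared_eq)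
  have c2: "c * c \<noteq> 1" using c0 c1 by (simp add: square_eq_1_iff)
  have sinpos: "sin th > 0"
    using thr by (intro sin_gt_zero) (auto simp: arccos_lt_bounded th_def c1 c0)
  define e where "e = S *\<^sub>R u"
  define e' where "e' = (1 / sin th) *\<^sub>R (S *\<^sub>R v - c *\<^sub>R e)"
  have ee: "inner e e = 1" using uu S \<kappa> by (simp add: e_def)
  have euv: "inner e (S *\<^sub>R v) = c" using S by (simp add: e_def c_def)
  have ee': "inner e e' = 0" using ee euv by (simp add: e'_def inner_diff_right)
  have "inner (S *\<^sub>R v - c *\<^sub>R e) (S *\<^sub>R v - c *\<^sub>R e) = 1 - c\<^sup>2"
    using ee euv vv S \<kappa>
    by (simp add: inner_diff_right inner_diff_left inner_commute power2_eq_square)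
  hence e'e': "inner e' e' = 1" using sin2 c2 by (simp add: e'_def power2_eq_square)
  define h where "h = (\<lambda>s::real. (1/S) *\<^sub>R (cos (S * s) *\<^sub>R e + sin (S * s) *\<^sub>R e'))"
  have hh: "\<kappa> * inner (h s) (h t) = cos (S * s - S * t)" for s t
    using inner_orthonormal_circle[OF ee e'e' ee'] S by (auto simp: h_def)
  have hsph: "h s \<in> model_sphere \<kappa>" for s
    using hh[of s s] \<kappa> by (intro in_model_sphereI) (auto simp: field_simps)
  have mduv: "model_dist \<kappa> u v = th / S" by (simp add: model_dist_def th_def c_def S_def)
  have h0: "h 0 = u" using S by (simp add: h_def e_def)
  have "h (th / S) = (1/S) *\<^sub>R (c *\<^sub>R e + (S *\<^sub>R v - c *\<^sub>R e))"
    using S sinpos costh by (simp add: h_def e'_def)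
  hence h1: "h (model_dist \<kappa> u v) = v" using mduv S by simp
  have hd: "model_dist \<kappa> (h s) (h t) = \<bar>s - t\<bar>" if "s \<in> {0..th/S}" "t \<in> {0..th/S}" for s t
  proof -
    have "0 \<le> S * s" "S * s \<le> th" "0 \<le> S * t" "S * t \<le> th" using that S by (auto simp: field_simps)
    hence "\<bar>S * s - S * t\<bar> \<le> th" by linarith
    moreover have "\<bar>S * s - S * t\<bar> = S * \<bar>s - t\<bar>"
      using S by (simp add: abs_mult right_diff_distrib[symmetric])
    moreover have "cos (S * s - S * t) = cos \<bar>S * s - S * t\<bar>" by (rule cos_abs_real[symmetric])
    ultimately show ?thesis using hh[of s t] \<kappa> S thr
      by (intro model_dist_eqI) (auto simp: S_def)
  qed
  show ?thesis unfolding geodesic_in_def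
    by (intro exI[of _ h]) (use h0 h1 hsph hd mduv in auto)
qed

lemma vector3_inner:
  "inner (vector [a1, a2, a3] :: real^3) (vector [b1, b2, b3]) = a1 * b1 + a2 * b2 + a3 * b3"
  by (simp add: inner_vec_def sum_3)

text \<open>The third vertex is placed by the spherical law of cosines.\<close>
lemma model_triangle_exists:
  assumes \<kappa>: "\<kappa> > 0" and nonneg: "0 \<le> a" "0 \<le> b" "0 \<le> c"
    and tri: "a \<le> b + c" "b \<le> a + c" "c \<le> a + b"
    and short: "sqrt \<kappa> * a \<le> pi/2" "sqrt \<kappa> * b \<le> pi/2" "sqrt \<kappa> * c \<le> pi/2"
  shows "\<exists>p q r. p \<in> model_sphere \<kappa> \<and> q \<in> model_sphere \<kappa> \<and> r \<in> model_sphere \<kappa> \<and>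
     \<kappa> * inner p q = cos (sqrt \<kappa> * a) \<and> \<kappa> * inner q r = cos (sqrt \<kappa> * b) \<and>
     \<kappa> * inner r p = cos (sqrt \<kappa> * c)"
proof -
  define S where "S = sqrt \<kappa>"
  have S: "S > 0" "S * S = \<kappa>" using \<kappa> by (auto simp: S_def)
  define A where "A = S * a"
  define B where "B = S * b"
  define C where "C = S * c"
  have ABC: "0 \<le> A" "0 \<le> B" "0 \<le> C" "A \<le> pi/2" "B \<le> pi/2" "C \<le> pi/2"
    using nonneg short S by (auto simp: A_def B_def C_def S_def)
  have tri': "A \<le> B + C" "B \<le> A + C" "C \<le> A + B"
    using tri S by (auto simp: A_def B_def C_def distrib_left[symmetric] mult_left_mono)
  obtain \<gamma> where \<gamma>: "\<bar>\<gamma>\<bar> \<le> 1" and law: "cos A * cos B + sin A * sin B * \<gamma> = cos C"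
  proof (cases "A = 0 \<or> B = 0")
    case True
    hence "(A = 0 \<and> B = C) \<or> (B = 0 \<and> A = C)" using tri' ABC by auto
    thus ?thesis using True that[of 1] by auto
  next
    case False
    hence "sin A > 0" "sin B > 0" using ABC by (auto intro!: sin_gt_zero)
    hence pos: "sin A * sin B > 0" by simp
    have "cos (A + B) \<le> cos C" using tri' ABC by (intro cos_monotone_0_pi_le) auto
    hence lower: "cos A * cos B - sin A * sin B \<le> cos C" by (simp add: cos_add)
    have "cos C \<le> cos \<bar>A - B\<bar>" using tri' ABC by (intro cos_monotone_0_pi_le) auto
    hence upper: "cos C \<le> cos A * cos B + sin A * sin B" by (simp add: cos_diff)
    show ?thesis
    proof (rule that[of "(cos C - cos A * cos B) / (sin A * sin B)"])
      show "\<bar>(cos C - cos A * cos B) / (sin A * sin B)\<bar> \<le> 1"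
        using lower upper pos by (auto simp: abs_le_iff field_simps)
      show "cos A * cos B + sin A * sin B * ((cos C - cos A * cos B) / (sin A * sin B)) = cos C"
        using pos by auto
    qed
  qed
  have \<gamma>2: "\<gamma>\<^sup>2 \<le> 1" using \<gamma> by (simp add: abs_square_le_1)
  define q :: "real^3" where "q = (1/S) *\<^sub>R vector [1, 0, 0]"
  define r :: "real^3" where "r = (1/S) *\<^sub>R vector [cos B, sin B, 0]"
  define p :: "real^3" where "p = (1/S) *\<^sub>R vector [cos A, sin A * \<gamma>, sin A * sqrt (1 - \<gamma>\<^sup>2)]"
  have "inner p p = (1/(S*S)) * ((cos A)\<^sup>2 + (sin A)\<^sup>2 * (\<gamma>\<^sup>2 + (sqrt (1 - \<gamma>\<^sup>2))\<^sup>2))"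
    by (simp add: p_def vector3_inner power2_eq_square algebra_simps)
  hence pp: "inner p p = 1/\<kappa>" using \<gamma>2 S by simp
  have qq: "inner q q = 1/\<kappa>" using S by (simp add: q_def vector3_inner)
  have rr: "inner r r = 1/\<kappa>"
    using S by (simp add: r_def vector3_inner power2_eq_square[symmetric] power_divide)
  have "\<kappa> * inner p q = cos A" "\<kappa> * inner q r = cos B" using S \<kappa>
    by (simp_all add: p_def q_def r_def vector3_inner)
  moreover have "\<kappa> * inner r p = cos C"
    using S \<kappa> law by (simp add: r_def p_def vector3_inner algebra_simps)
  ultimately show ?thesis using pp qq rr \<kappa>
    by (intro exI[of _ p] exI[of _ q] exI[of _ r])
      (auto intro: in_model_sphereI simp: A_def B_def C_def S_def)
qed

text \<open>The midpoint of the model segment qr is (q + r) / (2 cos (sqrt \<kappa> |qr| / 2)).\<close>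
lemma model_midpoint_inner:
  assumes \<kappa>: "\<kappa> > 0"
    and sph: "p \<in> model_sphere \<kappa>" "q \<in> model_sphere \<kappa>" "r \<in> model_sphere \<kappa>" "u \<in> model_sphere \<kappa>"
    and qu: "model_dist \<kappa> q u = b/2" and ur: "model_dist \<kappa> u r = b/2"
    and qr: "\<kappa> * inner q r = cos (sqrt \<kappa> * b)"
    and b: "0 \<le> b" "sqrt \<kappa> * b < pi"
  shows "2 * cos (sqrt \<kappa> * b / 2) * (\<kappa> * inner u p) = \<kappa> * inner p q + \<kappa> * inner r p"
proof -
  define cb where "cb = cos (sqrt \<kappa> * b / 2)"
  have "0 \<le> sqrt \<kappa> * b" using b \<kappa> by simp
  hence cb: "cb > 0" using b by (auto simp: cb_def intro!: cos_gt_zero_pi)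
  have cos_b: "cos (sqrt \<kappa> * b) = 2 * cb\<^sup>2 - 1"
    using cos_double_cos[of "sqrt \<kappa> * b / 2"] by (simp add: cb_def)
  have qu': "\<kappa> * inner q u = cb" using cos_model_dist[OF \<kappa> sph(2,4)] qu by (simp add: cb_def)
  have ur': "\<kappa> * inner u r = cb" using cos_model_dist[OF \<kappa> sph(4,3)] ur by (simp add: cb_def)
  define w where "w = (1 / (2 * cb)) *\<^sub>R (q + r)"
  have uu: "inner u u = 1/\<kappa>" and qq: "inner q q = 1/\<kappa>" and rr: "inner r r = 1/\<kappa>"
    using model_sphere_inner_self[OF \<kappa>] sph by auto
  have "inner u w = (inner q u + inner u r) / (2 * cb)"
    by (simp add: w_def inner_add_right inner_commute add_divide_distrib)
  also have "inner q u + inner u r = 2 * cb / \<kappa>" using qu' ur' \<kappa> by (simp add: field_simps)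
  finally have uw: "inner u w = 1/\<kappa>" using cb by simp
  have "inner w w = (inner q q + 2 * inner q r + inner r r) / (4 * cb\<^sup>2)"
    using cb
    by (simp add: w_def inner_add_right inner_add_left inner_commute power2_eq_square
        add_divide_distrib)
  also have "\<dots> = 1/\<kappa>" using qq rr qr cos_b cb \<kappa> by (simp add: field_simps power2_eq_square)
  finally have ww: "inner w w = 1/\<kappa>" .
  have "inner (u - w) (u - w) = 0" using uu uw ww
    by (simp add: inner_diff_left inner_diff_right inner_commute)
  hence "u = w" by simp
  hence "inner u p = (inner p q + inner r p) / (2 * cb)"
    by (simp add: w_def inner_add_left inner_add_right inner_commute add_divide_distrib)
  thus ?thesis using cb by (simp add: cb_def field_simps)
qed

lemma sec_minus_cos_strict_mono:
  fixes s t :: real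
  assumes "0 \<le> s" "s < t" "t < pi/2"
  shows "1 / cos s - cos s < 1 / cos t - cos t"
proof -
  have "0 < cos t" using assms by (intro cos_gt_zero_pi) auto
  moreover have "cos t < cos s" using assms by (intro cos_monotone_0_pi) auto
  ultimately have "1 / cos s < 1 / cos t" by (intro frac_less2) auto
  thus ?thesis using \<open>cos t < cos s\<close> by linarith
qed

text \<open>The convexity estimate for h(c) = 1/c - c behind the midpoint inequality for Psi:
  h is decreasing, h(s/a) \<le> h(s) - (1 - a) for averages s \<le> 1, and 1/c is convex.\<close>
lemma sec_minus_cos_midpoint:
  fixes cy cz ca cm :: real
  assumes "0 < cy" "cy \<le> 1" "0 < cz" "cz \<le> 1" "0 < ca" "ca \<le> 1" "0 < cm"
    and mid: "cy + cz \<le> 2 * ca * cm"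
  shows "1/cm - cm \<le> ((1/cy - cy) + (1/cz - cz))/2 - (1 - ca)"
proof -
  define s where "s = (cy + cz)/2"
  have s: "0 < s" "s \<le> 1" using assms by (auto simp: s_def)
  have "s / ca \<le> cm" using mid assms by (simp add: s_def field_simps)
  moreover have "0 < s / ca" using s assms by simp
  ultimately have "1/cm \<le> 1/(s/ca)" by (intro frac_le) auto
  hence "1/cm - cm \<le> ca/s - s/ca" using \<open>s / ca \<le> cm\<close> by simp
  also have "\<dots> \<le> 1/s - s - (1 - ca)"
  proof -
    have "1/s - s - (1 - ca) - (ca/s - s/ca) = (1 - ca) * (1/s - 1) + s * (1/ca - 1)"
      using s assms by (simp add: field_simps)
    moreover have "0 \<le> (1 - ca) * (1/s - 1)" "0 \<le> s * (1/ca - 1)"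
      using s assms by (intro mult_nonneg_nonneg; simp add: field_simps)+
    ultimately show ?thesis by linarith
  qed
  also have "\<dots> \<le> ((1/cy - cy) + (1/cz - cz))/2 - (1 - ca)"
  proof -
    have "4 * cy * cz \<le> (cy + cz) * (cy + cz)" using sum_squares_ge_zero[of "cy - cz" 0]
      by (simp add: algebra_simps power2_eq_square)
    hence "1/s \<le> (1/cy + 1/cz)/2" using assms by (simp add: s_def field_simps)
    thus ?thesis by (simp add: s_def field_simps)
  qed
  finally show ?thesis .
qed

lemma lsc_eventually_greater:
  fixes f :: "'a::metric_space \<Rightarrow> ereal"
  assumes "lsc f" "(y \<longlongrightarrow> z) F" "c < f z"
  shows "eventually (\<lambda>n. c < f (y n)) F"
proof -
  have "eventually (\<lambda>w. c < f w) (at z)"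
    using assms(1,3) le_Liminf_iff unfolding lsc_def by blast
  then obtain d where d: "d > 0" "\<And>w. w \<noteq> z \<Longrightarrow> dist w z < d \<Longrightarrow> c < f w"
    unfolding eventually_at by auto
  have "eventually (\<lambda>n. dist (y n) z < d) F" using assms(2) d(1) by (rule tendstoD)
  thus ?thesis
    by (rule eventually_mono) (use d(2) assms(3) in fastforce)
qed

lemma lsc_le_Liminf:
  fixes f :: "'a::metric_space \<Rightarrow> ereal"
  assumes "lsc f" "(y \<longlongrightarrow> z) F"
  shows "f z \<le> Liminf F (\<lambda>n. f (y n))"
  using lsc_eventually_greater[OF assms] by (simp add: le_Liminf_iff)

lemma tendsto_if_cauchy:
  fixes g :: "'b \<Rightarrow> 'a::complete_space"
  assumes "F \<noteq> bot"
    and "\<And>e. e > 0 \<Longrightarrow> \<exists>P. eventually P F \<and> (\<forall>a b. P a \<and> P b \<longrightarrow> dist (g a) (g b) < e)"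
  shows "\<exists>z. (g \<longlongrightarrow> z) F"
proof -
  have "cauchy_filter (filtermap g F)"
    using assms(2) by (subst cauchy_filter_metric_filtermap) blast
  moreover have "filtermap g F \<noteq> bot" using assms(1) by (simp add: filtermap_bot_iff)
  ultimately obtain z where "filtermap g F \<le> nhds z"
    using cauchy_filter_complete_converges[OF _ complete_UNIV, of "filtermap g F"] by auto
  thus ?thesis unfolding filterlim_def by blast
qed

text \<open>The gap forces the terms of a minimising sequence together, so the sequence is Cauchy.\<close>
lemma unique_minimizer_if_midpoint_gap:
  fixes F :: "'a::complete_space \<Rightarrow> ereal" and gap :: "'a \<Rightarrow> 'a \<Rightarrow> real"
  assumes seq_lsc: "\<And>y z. y \<longlonglongrightarrow> z \<Longrightarrow> F z \<le> liminf (\<lambda>n. F (y n))"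
    and below: "\<And>y. ereal B \<le> F y" and finite: "F y0 \<noteq> \<infinity>"
    and midpoint: "\<And>y z a b. F y \<le> ereal a \<Longrightarrow> F z \<le> ereal b \<Longrightarrow>
      \<exists>m. F m \<le> ereal ((a + b) / 2 - gap y z)"
    and modulus: "\<And>e. e > 0 \<Longrightarrow> \<exists>\<delta>>0. \<forall>y z. gap y z < \<delta> \<longrightarrow> dist y z < e"
  shows "\<exists>!y. \<forall>z. F y \<le> F z"
proof -
  have "ereal B \<le> (INF w. F w)" by (rule INF_greatest) (rule below)
  moreover have "(INF w. F w) \<le> F y0" by (rule INF_lower) simp
  ultimately obtain m where m: "(INF w. F w) = ereal m" using finite by (cases "INF w. F w") auto
  have m_le: "ereal m \<le> F w" for w using m by (metis INF_lower UNIV_I)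
  have gap_le: "gap y z \<le> (a + b) / 2 - m" if ab: "F y \<le> ereal a" "F z \<le> ereal b" for y z a b
  proof -
    obtain w where "F w \<le> ereal ((a + b) / 2 - gap y z)" using midpoint[OF ab] by blast
    with m_le[of w] have "ereal m \<le> ereal ((a + b) / 2 - gap y z)" by (rule order_trans)
    thus ?thesis by simp
  qed
  define r where "r n = 1 / real (Suc n)" for n
  have "\<exists>y. F y < ereal (m + r n)" for n
  proof -
    have "(INF w. F w) < ereal (m + r n)" using m by (simp add: r_def)
    thus ?thesis by (simp add: INF_less_iff)
  qed
  then obtain y where "\<And>n. F (y n) < ereal (m + r n)" by metis
  hence y: "\<And>n. F (y n) \<le> ereal (m + r n)" by (simp add: less_imp_le)
  have "Cauchy y"
  proof (rule metric_CauchyI)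
    fix e :: real assume "e > 0"
    then obtain \<delta> where \<delta>: "\<delta> > 0" "\<And>y z. gap y z < \<delta> \<Longrightarrow> dist y z < e"
      using modulus by blast
    obtain N where N: "r N < \<delta>" using \<delta>(1) by (metis nat_approx_posE r_def)
    have "dist (y i) (y j) < e" if "N \<le> i" "N \<le> j" for i j
    proof (rule \<delta>(2))
      have "r i \<le> r N" "r j \<le> r N" using that by (simp_all add: r_def frac_le)
      thus "gap (y i) (y j) < \<delta>" using gap_le[OF y y, of i j] N by argo
    qed
    thus "\<exists>N. \<forall>i\<ge>N. \<forall>j\<ge>N. dist (y i) (y j) < e" by blast
  qed
  then obtain z where z: "y \<longlonglongrightarrow> z" using Cauchy_convergent convergent_def by blast
  have "(\<lambda>n. m + r n) \<longlonglongrightarrow> m"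
    using tendsto_add[OF tendsto_const LIMSEQ_Suc[OF lim_1_over_n], of m] by (simp add: r_def)
  hence "liminf (\<lambda>n. ereal (m + r n)) = ereal m" by (intro lim_imp_Liminf) auto
  moreover have "liminf (\<lambda>n. F (y n)) \<le> liminf (\<lambda>n. ereal (m + r n))"
    by (rule Liminf_mono) (use y in simp)
  ultimately have "liminf (\<lambda>n. F (y n)) \<le> ereal m" by simp
  hence "F z \<le> ereal m" using seq_lsc[OF z] by simp
  hence ex: "\<forall>w. F z \<le> F w" using m_le order_trans by blast
  have "y1 = y2" if "\<forall>w. F y1 \<le> F w" "\<forall>w. F y2 \<le> F w" for y1 y2
  proof -
    have "F y1 \<le> ereal m" "F y2 \<le> ereal m"
      using that \<open>F z \<le> ereal m\<close> by (meson order_trans)+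
    hence "gap y1 y2 \<le> 0" using gap_le by fastforce
    hence "dist y1 y2 < e" if "e > 0" for e using modulus[OF that] by fastforce
    thus ?thesis using zero_less_dist_iff by blast
  qed
  with ex show ?thesis by blast
qed

lemma geodesic_in_dist:
  assumes "geodesic_in S d g x y" "s \<in> {0..d x y}" "t \<in> {0..d x y}"
  shows "d (g s) (g t) = \<bar>s - t\<bar>"
  using assms unfolding geodesic_in_def by blast

lemma Psi_eq: "Psi \<kappa> x y = (1 / cos (sqrt \<kappa> * dist x y) - cos (sqrt \<kappa> * dist x y)) / \<kappa>"
  by (simp add: Psi_def dist_commute diff_divide_distrib)

definition midpoint_gap :: "real \<Rightarrow> real \<Rightarrow> real" where
  "midpoint_gap \<kappa> d = (1 - cos (sqrt \<kappa> * d / 2)) / \<kappa>"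

lemma midpoint_gap_mono:
  assumes "\<kappa> > 0" "0 \<le> d" "d \<le> d'" "sqrt \<kappa> * d' \<le> 2 * pi"
  shows "midpoint_gap \<kappa> d \<le> midpoint_gap \<kappa> d'"
proof -
  have "cos (sqrt \<kappa> * d' / 2) \<le> cos (sqrt \<kappa> * d / 2)"
    using assms by (intro cos_monotone_0_pi_le) (auto intro: mult_left_mono)
  thus ?thesis using assms(1) by (simp add: midpoint_gap_def divide_right_mono)
qed

lemma midpoint_gap_pos:
  assumes "\<kappa> > 0" "0 < d" "sqrt \<kappa> * d \<le> 2 * pi"
  shows "0 < midpoint_gap \<kappa> d"
proof -
  have "cos (sqrt \<kappa> * d / 2) < cos 0" using assms by (intro cos_monotone_0_pi) auto
  thus ?thesis using assms(1) by (simp add: midpoint_gap_def)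
qed

locale small_CAT =
  fixes \<kappa> :: real and space :: "'a::metric_space itself"
  assumes kappa_pos: "\<kappa> > 0"
    and CAT: "CAT \<kappa> space"
    and diameter: "\<And>v w::'a. dist v w < pi / (2 * sqrt \<kappa>)"
begin

lemma angle_less: "sqrt \<kappa> * dist v w < pi / 2" for v w :: 'a
  using diameter[of v w] kappa_pos by (simp add: field_simps)

lemma angle_nonneg: "0 \<le> sqrt \<kappa> * dist v w" for v w :: 'a
  using kappa_pos by simp

lemma cos_dist_pos: "0 < cos (sqrt \<kappa> * dist v w)" for v w :: 'a
  using angle_less[of v w] angle_nonneg[of v w] by (intro cos_gt_zero_pi) auto

lemma geodesic_exists: "\<exists>g. geodesic_in UNIV dist g x y" for x y :: 'a
proof -
  have "pi / (2 * sqrt \<kappa>) \<le> pi / sqrt \<kappa>" using kappa_pos by (simp add: frac_le)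
  hence "dist x y < pi / sqrt \<kappa>" using diameter[of x y] by linarith
  thus ?thesis using CAT unfolding CAT_def by blast
qed

text \<open>The comparison point of the midpoint is known explicitly by model_midpoint_inner, and the
  CAT(\<kappa>) inequality bounds the distance from the midpoint to x by the model distance.\<close>
lemma CAT_midpoint_cos:
  fixes x y z :: 'a
  assumes g: "geodesic_in UNIV dist g y z"
  shows "cos (sqrt \<kappa> * dist x y) + cos (sqrt \<kappa> * dist x z)
     \<le> 2 * cos (sqrt \<kappa> * dist y z / 2) * cos (sqrt \<kappa> * dist x (g (dist y z / 2)))"
proof -
  define S where "S = sqrt \<kappa>"
  have S: "S > 0" using kappa_pos by (simp add: S_def)
  have short: "S * dist v w \<le> pi/2" for v w :: 'a using angle_less[of v w] by (simp add: S_def)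
  obtain g1 where g1: "geodesic_in UNIV dist g1 x y" using geodesic_exists by blast
  obtain g3 where g3: "geodesic_in UNIV dist g3 z x" using geodesic_exists by blast
  obtain p q r where sph: "p \<in> model_sphere \<kappa>" "q \<in> model_sphere \<kappa>" "r \<in> model_sphere \<kappa>"
    and pq: "\<kappa> * inner p q = cos (S * dist x y)" and qr: "\<kappa> * inner q r = cos (S * dist y z)"
    and rp: "\<kappa> * inner r p = cos (S * dist z x)"
    using model_triangle_exists[OF kappa_pos, of "dist x y" "dist y z" "dist z x"] short[of x y]
      short[of y z] short[of z x] dist_triangle[of x y z] dist_triangle[of y z x]
      dist_triangle[of z x y]
    by (auto simp: S_def dist_commute)
  have model_dist_eq: "model_dist \<kappa> u v = dist a b"
    if "\<kappa> * inner u v = cos (S * dist a b)" for u v and a b :: 'a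
  proof (rule model_dist_eqI[OF kappa_pos])
    show "sqrt \<kappa> * dist a b \<le> pi"
      using short[of a b] angle_nonneg[of a b] unfolding S_def by linarith
  qed (use that in \<open>simp_all add: S_def\<close>)
  have not_antipodal: "-1 < cos (S * dist v w)" for v w :: 'a
    using cos_dist_pos[of v w] by (simp add: S_def)
  obtain h1 where h1: "geodesic_in (model_sphere \<kappa>) (model_dist \<kappa>) h1 p q"
    using model_geodesic_exists[OF kappa_pos sph(1,2)] pq not_antipodal by auto
  obtain h2 where h2: "geodesic_in (model_sphere \<kappa>) (model_dist \<kappa>) h2 q r"
    using model_geodesic_exists[OF kappa_pos sph(2,3)] qr not_antipodal by auto
  obtain h3 where h3: "geodesic_in (model_sphere \<kappa>) (model_dist \<kappa>) h3 r p"
    using model_geodesic_exists[OF kappa_pos sph(3,1)] rp not_antipodal by auto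
  have "S * (dist x y + dist y z + dist z x) < 2 * pi"
    using angle_less[of x y] angle_less[of y z] angle_less[of z x] pi_gt_zero
    unfolding distrib_left S_def by linarith
  hence perimeter: "dist x y + dist y z + dist z x < 2 * pi / sqrt \<kappa>"
    using S by (simp add: S_def pos_less_divide_eq mult.commute)
  have "side_comparison \<kappa> g h2 (dist y z) g3 h3 (dist z x)"
    using CAT g1 g g3 perimeter sph h1 h2 h3
      model_dist_eq[OF pq] model_dist_eq[OF qr] model_dist_eq[OF rp]
    unfolding CAT_def by blast
  hence "dist (g (dist y z / 2)) (g3 (dist z x)) \<le> model_dist \<kappa> (h2 (dist y z / 2)) (h3 (dist z x))"
    unfolding side_comparison_def by simp
  moreover have "g3 (dist z x) = x" "h3 (dist z x) = p"
    using g3 h3 model_dist_eq[OF rp] unfolding geodesic_in_def by auto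
  ultimately have le: "S * dist x (g (dist y z / 2)) \<le> arccos (\<kappa> * inner (h2 (dist y z / 2)) p)"
    using S by (simp add: model_dist_def dist_commute S_def field_simps)
  define u where "u = h2 (dist y z / 2)"
  have h2_ends: "h2 0 = q" "h2 (dist y z) = r" "model_dist \<kappa> q r = dist y z"
    using h2 model_dist_eq[OF qr] unfolding geodesic_in_def by auto
  have u: "u \<in> model_sphere \<kappa>"
    using h2 h2_ends(3) unfolding geodesic_in_def u_def by auto
  have "model_dist \<kappa> q u = dist y z / 2" "model_dist \<kappa> u r = dist y z / 2"
    using geodesic_in_dist[OF h2, of 0 "dist y z / 2"]
      geodesic_in_dist[OF h2, of "dist y z / 2" "dist y z"]
      h2_ends by (simp_all add: u_def)
  have mid: "2 * cos (S * dist y z / 2) * (\<kappa> * inner u p) = cos (S * dist x y) + cos (S * dist z x)"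
  proof -
    have "S * dist y z < pi" using angle_less[of y z] pi_gt_zero unfolding S_def by linarith
    thus ?thesis using model_midpoint_inner[OF kappa_pos sph u] \<open>model_dist \<kappa> q u = dist y z / 2\<close>
        \<open>model_dist \<kappa> u r = dist y z / 2\<close> qr pq rp by (simp add: S_def)
  qed
  have "\<bar>\<kappa> * inner u p\<bar> \<le> 1" by (rule model_sphere_inner_bound[OF kappa_pos u sph(1)])
  hence "cos (arccos (\<kappa> * inner u p)) \<le> cos (S * dist x (g (dist y z / 2)))"
    using le S by (intro cos_monotone_0_pi_le) (auto simp: u_def abs_le_iff intro: arccos_ubound)
  hence "\<kappa> * inner u p \<le> cos (S * dist x (g (dist y z / 2)))"
    using \<open>\<bar>\<kappa> * inner u p\<bar> \<le> 1\<close> by (simp add: cos_arccos_abs)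
  moreover have "0 < cos (S * dist y z / 2)"
    using angle_less[of y z] angle_nonneg[of y z] unfolding S_def
    by (intro cos_gt_zero_pi) linarith+
  ultimately have "2 * cos (S * dist y z / 2) * (\<kappa> * inner u p)
      \<le> 2 * cos (S * dist y z / 2) * cos (S * dist x (g (dist y z / 2)))"
    by (intro mult_left_mono) auto
  thus ?thesis using mid by (simp add: S_def dist_commute)
qed

lemma Psi_nonneg: "0 \<le> Psi \<kappa> x w" for x w :: 'a
proof -
  have "cos (sqrt \<kappa> * dist x w) \<le> 1 / cos (sqrt \<kappa> * dist x w)"
    using cos_dist_pos[of x w]
    by (simp add: field_simps power2_eq_square[symmetric] abs_square_le_1)
  thus ?thesis using kappa_pos by (simp add: Psi_eq)
qed

lemma Psi_strict_mono: "dist x a < dist x b \<Longrightarrow> Psi \<kappa> x a < Psi \<kappa> x b" for x a b :: 'a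
  using sec_minus_cos_strict_mono[of "sqrt \<kappa> * dist x a" "sqrt \<kappa> * dist x b"]
    angle_nonneg[of x a] angle_less[of x b] kappa_pos
  by (simp add: Psi_eq divide_strict_right_mono)

lemma tendsto_Psi:
  fixes y :: "'b \<Rightarrow> 'a"
  assumes "(y \<longlongrightarrow> z) F"
  shows "((\<lambda>n. Psi \<kappa> x (y n)) \<longlongrightarrow> Psi \<kappa> x z) F"
proof -
  have "((\<lambda>n. cos (sqrt \<kappa> * dist x (y n))) \<longlongrightarrow> cos (sqrt \<kappa> * dist x z)) F"
    by (rule isCont_tendsto_compose[OF isCont_cos]) (intro tendsto_intros assms)
  thus ?thesis unfolding Psi_eq using cos_dist_pos[of x z] kappa_pos by (intro tendsto_intros) auto
qed

lemma Psi_midpoint: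
  fixes x y z :: 'a
  assumes g: "geodesic_in UNIV dist g y z"
  shows "Psi \<kappa> x (g (dist y z / 2)) \<le> (Psi \<kappa> x y + Psi \<kappa> x z) / 2 - midpoint_gap \<kappa> (dist y z)"
proof -
  define cy where "cy = cos (sqrt \<kappa> * dist x y)"
  define cz where "cz = cos (sqrt \<kappa> * dist x z)"
  define cm where "cm = cos (sqrt \<kappa> * dist x (g (dist y z / 2)))"
  define ca where "ca = cos (sqrt \<kappa> * dist y z / 2)"
  have "0 < ca" unfolding ca_def
    using angle_less[of y z] angle_nonneg[of y z] by (intro cos_gt_zero_pi) linarith+
  moreover have "cy + cz \<le> 2 * ca * cm"
    using CAT_midpoint_cos[OF g, of x] by (simp add: cy_def cz_def cm_def ca_def)
  ultimately have "1/cm - cm \<le> ((1/cy - cy) + (1/cz - cz))/2 - (1 - ca)"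
    using cos_dist_pos by (intro sec_minus_cos_midpoint) (auto simp: cy_def cz_def cm_def ca_def)
  hence "(1/cm - cm) / \<kappa> \<le> (((1/cy - cy) + (1/cz - cz))/2 - (1 - ca)) / \<kappa>"
    using kappa_pos by (simp add: divide_right_mono)
  thus ?thesis
    by (simp add: Psi_eq midpoint_gap_def cy_def cz_def cm_def ca_def diff_divide_distrib
        add_divide_distrib)
qed

lemma midpoint_gap_modulus:
  assumes "e > 0"
  shows "\<exists>\<delta>>0. \<forall>y z::'a. midpoint_gap \<kappa> (dist y z) < \<delta> \<longrightarrow> dist y z < e"
proof -
  define e' where "e' = min e (pi / (2 * sqrt \<kappa>))"
  have e': "0 < e'" "e' \<le> e" using assms kappa_pos by (auto simp: e'_def)
  have "e' \<le> pi / (2 * sqrt \<kappa>)" by (simp add: e'_def)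
  hence "sqrt \<kappa> * e' \<le> pi / 2" using kappa_pos by (simp add: pos_le_divide_eq mult.commute)
  have "dist y z < e" if "midpoint_gap \<kappa> (dist y z) < midpoint_gap \<kappa> e'" for y z :: 'a
  proof (rule ccontr)
    assume "\<not> dist y z < e"
    hence "midpoint_gap \<kappa> e' \<le> midpoint_gap \<kappa> (dist y z)"
      using e' angle_less[of y z] angle_nonneg[of y z] pi_gt_zero kappa_pos
      by (intro midpoint_gap_mono) linarith+
    with that show False by simp
  qed
  moreover have "0 < midpoint_gap \<kappa> e'"
    using e' \<open>sqrt \<kappa> * e' \<le> pi / 2\<close> kappa_pos pi_gt_zero by (intro midpoint_gap_pos) linarith+
  ultimately show ?thesis by blast
qed

text \<open>Convexity pulls very negative values at far points back to points near a finite value,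
  which lower semicontinuity forbids; the bounded diameter makes the pulled-back points converge.\<close>
lemma convex_lsc_bounded_below:
  fixes f :: "'a \<Rightarrow> ereal"
  assumes proper: "proper_fun f" and convex: "geod_convex f" and lsc: "lsc f"
  shows "\<exists>B. \<forall>y. ereal B \<le> f y"
proof (rule ccontr)
  assume "\<nexists>B. \<forall>y. ereal B \<le> f y"
  hence "\<forall>n::nat. \<exists>y. f y < ereal (- (real (Suc n))\<^sup>2)" by (simp add: not_le)
  then obtain y where y: "\<And>n. f (y n) < ereal (- (real (Suc n))\<^sup>2)" by metis
  obtain z0 a where a: "f z0 = ereal a"
    using proper unfolding proper_fun_def by (metis ereal_cases)
  have "\<forall>n. \<exists>g. geodesic_in UNIV dist g z0 (y n)" using geodesic_exists by blast
  then obtain G where G: "\<And>n. geodesic_in UNIV dist (G n) z0 (y n)" by metis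
  define t where "t n = 1 / real (Suc n)" for n
  have t: "0 < t n" "t n \<le> 1" for n by (auto simp: t_def)
  define w where "w n = G n (t n * dist z0 (y n))" for n
  have "dist (w n) z0 = t n * dist z0 (y n)" for n
    using geodesic_in_dist[OF G[of n], of 0 "t n * dist z0 (y n)"] t[of n] G[of n]
    by (simp add: w_def geodesic_in_def mult_left_le_one_le dist_commute)
  moreover have "t n * dist z0 (y n) \<le> t n * (pi / (2 * sqrt \<kappa>))" for n
    using diameter[of z0 "y n"] t[of n] by (intro mult_left_mono) auto
  ultimately have dist_w: "norm (dist (w n) z0) \<le> t n * (pi / (2 * sqrt \<kappa>))" for n
    using t[of n] by (simp add: abs_mult)
  have "t \<longlonglongrightarrow> 0" unfolding t_def by (rule LIMSEQ_Suc[OF lim_1_over_n])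
  hence "(\<lambda>n. t n * (pi / (2 * sqrt \<kappa>))) \<longlonglongrightarrow> 0" by (rule tendsto_mult_left_zero)
  hence "(\<lambda>n. dist (w n) z0) \<longlonglongrightarrow> 0"
    by (rule Lim_null_comparison[OF always_eventually, rotated]) (use dist_w in blast)
  hence "w \<longlonglongrightarrow> z0" by (simp only: tendsto_dist_iff[of w z0])
  hence "eventually (\<lambda>n. ereal (a - 1) < f (w n)) sequentially"
    using a by (intro lsc_eventually_greater[OF lsc]) auto
  then obtain N where N: "\<And>n. N \<le> n \<Longrightarrow> ereal (a - 1) < f (w n)"
    unfolding eventually_sequentially by blast
  define n where "n = max N (nat \<lceil>\<bar>a\<bar> - a\<rceil>)"
  obtain b where b: "f (y n) = ereal b" "b < - (real (Suc n))\<^sup>2"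
    using y[of n] proper unfolding proper_fun_def by (cases "f (y n)") auto
  have "ereal (a - 1) < f (w n)" using N[of n] by (simp add: n_def)
  also have "f (w n) \<le> ereal (1 - t n) * f z0 + ereal (t n) * f (y n)"
    using convex G[of n] t[of n] unfolding geod_convex_def w_def by auto
  also have "\<dots> = ereal ((1 - t n) * a + t n * b)" using a b by simp
  finally have "a - 1 < (1 - t n) * a + t n * b" by simp
  moreover have "t n * b < - real (Suc n)"
    using mult_strict_left_mono[OF b(2) t(1)[of n]] by (simp add: t_def power2_eq_square)
  moreover have "(1 - t n) * a \<le> \<bar>a\<bar>"
  proof -
    have "(1 - t n) * a \<le> (1 - t n) * \<bar>a\<bar>" using t[of n] by (intro mult_left_mono) auto
    also have "\<dots> \<le> \<bar>a\<bar>" using t[of n] by (intro mult_left_le_one_le) auto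
    finally show ?thesis .
  qed
  moreover have "\<bar>a\<bar> - a \<le> real n" unfolding n_def by linarith
  ultimately show False by simp
qed

end

lemma geod_convex_midpoint:
  assumes "geod_convex f" "geodesic_in UNIV dist g y z"
  shows "f (g (dist y z / 2)) \<le> ereal (1/2) * f y + ereal (1/2) * f z"
proof -
  have "f (g ((1/2) * dist y z)) \<le> ereal (1 - 1/2) * f y + ereal (1/2) * f z"
    using assms unfolding geod_convex_def by (metis atLeastAtMost_iff divide_nonneg_nonneg
      divide_le_eq_1_pos less_eq_real_def one_le_numeral zero_le_one zero_less_numeral)
  thus ?thesis by simp
qed

locale CAT_convex = small_CAT \<kappa> "TYPE('a::complete_space)" for \<kappa> +
  fixes f :: "'a::complete_space \<Rightarrow> ereal"
  assumes proper: "proper_fun f" and convex: "geod_convex f" and lsc: "lsc f"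
begin

lemma resolvent_minimizes:
  assumes l: "l > 0"
  shows "f (resolvent \<kappa> f l x) + ereal (Psi \<kappa> x (resolvent \<kappa> f l x) / l)
    \<le> f z + ereal (Psi \<kappa> x z / l)"
proof -
  define F where "F w = f w + ereal (Psi \<kappa> x w / l)" for w
  have Psi_tendsto: "((\<lambda>n. ereal (Psi \<kappa> x (y n) / l)) \<longlongrightarrow> ereal (Psi \<kappa> x z / l)) sequentially"
    if "y \<longlonglongrightarrow> z" for y z
    using tendsto_Psi[OF that] l by (intro tendsto_ereal tendsto_divide tendsto_const) auto
  have "F z \<le> liminf (\<lambda>n. F (y n))" if y: "y \<longlonglongrightarrow> z" for y z
  proof -
    have "F z \<le> liminf (\<lambda>n. f (y n)) + ereal (Psi \<kappa> x z / l)"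
      unfolding F_def by (rule add_right_mono[OF lsc_le_Liminf[OF lsc y]])
    also have "\<dots> = liminf (\<lambda>n. F (y n))"
      using ereal_liminf_lim_add[OF Psi_tendsto[OF y], of "\<lambda>n. f (y n)"]
      by (simp add: F_def add.commute)
    finally show ?thesis .
  qed
  moreover obtain B where "\<And>y. ereal B \<le> f y"
    using convex_lsc_bounded_below[OF proper convex lsc] by blast
  hence "\<And>y. ereal B \<le> F y"
    using Psi_nonneg l unfolding F_def by (metis add_increasing2 ereal_less_eq(5) divide_nonneg_pos)
  moreover obtain y0 where "f y0 \<noteq> \<infinity>" using proper unfolding proper_fun_def by blast
  hence "F y0 \<noteq> \<infinity>" by (simp add: F_def)
  moreover have "\<exists>m. F m \<le> ereal ((a + b) / 2 - midpoint_gap \<kappa> (dist y z) / l)"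
    if Fyz: "F y \<le> ereal a" "F z \<le> ereal b" for y z a b
  proof -
    obtain fy fz where fyz: "f y = ereal fy" "f z = ereal fz"
      using Fyz proper unfolding F_def proper_fun_def by (cases "f y"; cases "f z") auto
    obtain g where g: "geodesic_in UNIV dist g y z" using geodesic_exists by blast
    have "f (g (dist y z / 2)) \<le> ereal ((fy + fz) / 2)"
      using geod_convex_midpoint[OF convex g] fyz by (simp add: add_divide_distrib)
    moreover have "Psi \<kappa> x (g (dist y z / 2)) / l \<le>
        ((Psi \<kappa> x y + Psi \<kappa> x z) / 2 - midpoint_gap \<kappa> (dist y z)) / l"
      using Psi_midpoint[OF g, of x] l by (simp add: divide_right_mono)
    ultimately have "F (g (dist y z / 2)) \<le> ereal ((fy + fz) / 2) +
        ereal (((Psi \<kappa> x y + Psi \<kappa> x z) / 2 - midpoint_gap \<kappa> (dist y z)) / l)"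
      unfolding F_def by (intro add_mono) auto
    also have "\<dots> = ereal ((fy + Psi \<kappa> x y / l + (fz + Psi \<kappa> x z / l)) / 2
        - midpoint_gap \<kappa> (dist y z) / l)"
      by (simp add: diff_divide_distrib add_divide_distrib)
    also have "\<dots> \<le> ereal ((a + b) / 2 - midpoint_gap \<kappa> (dist y z) / l)"
    proof -
      have "fy + Psi \<kappa> x y / l \<le> a" "fz + Psi \<kappa> x z / l \<le> b"
        using Fyz fyz by (simp_all add: F_def)
      thus ?thesis unfolding ereal_less_eq(3) by argo
    qed
    finally show ?thesis by blast
  qed
  moreover have "\<exists>\<delta>>0. \<forall>y z::'a. midpoint_gap \<kappa> (dist y z) / l < \<delta> \<longrightarrow> dist y z < e"
    if e: "e > 0" for e
  proof -
    obtain \<delta> where \<delta>: "\<delta> > 0" "\<forall>y z::'a. midpoint_gap \<kappa> (dist y z) < \<delta> \<longrightarrow> dist y z < e"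
      using midpoint_gap_modulus[OF e] by blast
    have "midpoint_gap \<kappa> d / l < \<delta> / l \<longleftrightarrow> midpoint_gap \<kappa> d < \<delta>" for d
      using l by (simp add: divide_less_cancel)
    thus ?thesis using \<delta> l by (intro exI[of _ "\<delta> / l"]) auto
  qed
  ultimately have "\<exists>!y. \<forall>z. F y \<le> F z"
    by (rule unique_minimizer_if_midpoint_gap)
  hence "\<forall>z. F (THE y. \<forall>z. F y \<le> F z) \<le> F z" by (rule theI')
  thus ?thesis by (simp add: F_def resolvent_def)
qed

lemma resolvent_finite:
  assumes "l > 0"
  shows "\<exists>r. f (resolvent \<kappa> f l x) = ereal r"
proof -
  obtain z c where c: "f z = ereal c"
    using proper unfolding proper_fun_def by (metis ereal_cases)
  have "f (resolvent \<kappa> f l x) \<le> f (resolvent \<kappa> f l x) + ereal (Psi \<kappa> x (resolvent \<kappa> f l x) / l)"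
    using Psi_nonneg assms by (simp add: add_increasing2)
  also have "\<dots> \<le> ereal (c + Psi \<kappa> x z / l)"
    using resolvent_minimizes[OF assms, of x z] c by simp
  finally show ?thesis using proper unfolding proper_fun_def by (cases "f (resolvent \<kappa> f l x)") auto
qed

lemma resolvent_le:
  assumes "l > 0" "f (resolvent \<kappa> f l x) = ereal r" "f w = ereal c"
  shows "r + Psi \<kappa> x (resolvent \<kappa> f l x) / l \<le> c + Psi \<kappa> x w / l"
  using resolvent_minimizes[OF assms(1), of x w] assms(2,3) by simp

text \<open>Comparing the minimality of both resolvents: the weight 1/l can only favour larger
  Psi and smaller f as l grows.\<close>
lemma resolvent_mono:
  assumes lm: "0 < l" "l \<le> m"
    and rl: "f (resolvent \<kappa> f l x) = ereal rl" and rm: "f (resolvent \<kappa> f m x) = ereal rm"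
  shows "Psi \<kappa> x (resolvent \<kappa> f l x) \<le> Psi \<kappa> x (resolvent \<kappa> f m x)" and "rm \<le> rl"
proof -
  define Pl where "Pl = Psi \<kappa> x (resolvent \<kappa> f l x)"
  define Pm where "Pm = Psi \<kappa> x (resolvent \<kappa> f m x)"
  have m: "0 < m" using lm by simp
  have l_min: "rl + Pl / l \<le> rm + Pm / l"
    using resolvent_le[OF lm(1) rl rm] by (simp add: Pl_def Pm_def)
  have m_min: "rm + Pm / m \<le> rl + Pl / m"
    using resolvent_le[OF m rm rl] by (simp add: Pl_def Pm_def)
  have "Pl * (1/l - 1/m) \<le> Pm * (1/l - 1/m)"
    using l_min m_min by (simp add: algebra_simps)
  moreover have "0 < 1/l - 1/m" if "l \<noteq> m" using lm that by (simp add: frac_less2)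
  ultimately have "Pl \<le> Pm" by (cases "l = m") (simp_all add: Pl_def Pm_def)
  thus "Psi \<kappa> x (resolvent \<kappa> f l x) \<le> Psi \<kappa> x (resolvent \<kappa> f m x)" by (simp add: Pl_def Pm_def)
  have "Pl / m \<le> Pm / m" using \<open>Pl \<le> Pm\<close> m by (simp add: divide_right_mono)
  thus "rm \<le> rl" using m_min by linarith
qed

lemma resolvent_midpoint_gap:
  assumes lm: "0 < l" "l \<le> m"
  shows "midpoint_gap \<kappa> (dist (resolvent \<kappa> f l x) (resolvent \<kappa> f m x))
    \<le> (Psi \<kappa> x (resolvent \<kappa> f m x) - Psi \<kappa> x (resolvent \<kappa> f l x)) / 2"
proof -
  define a where "a = resolvent \<kappa> f l x"
  define b where "b = resolvent \<kappa> f m x"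
  obtain rl rm where rl: "f a = ereal rl" and rm: "f b = ereal rm"
    using resolvent_finite lm by (metis a_def b_def less_le_trans)
  obtain g where g: "geodesic_in UNIV dist g a b" using geodesic_exists by blast
  define c where "c = g (dist a b / 2)"
  have "f c \<le> ereal ((rl + rm) / 2)"
    using geod_convex_midpoint[OF convex g] rl rm by (simp add: c_def add_divide_distrib)
  also have "(rl + rm) / 2 \<le> rl"
    using resolvent_mono(2)[OF lm rl[unfolded a_def] rm[unfolded b_def]] by simp
  finally obtain fc where fc: "f c = ereal fc" "fc \<le> rl"
    using proper unfolding proper_fun_def by (cases "f c") auto
  have "rl + Psi \<kappa> x a / l \<le> fc + Psi \<kappa> x c / l"
    using resolvent_le[OF lm(1) _ fc(1)] rl by (simp add: a_def)
  hence "Psi \<kappa> x a / l \<le> Psi \<kappa> x c / l" using fc(2) by linarith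
  hence "Psi \<kappa> x a \<le> Psi \<kappa> x c" using lm(1) by (simp add: divide_le_cancel)
  moreover have "Psi \<kappa> x c \<le> (Psi \<kappa> x a + Psi \<kappa> x b) / 2 - midpoint_gap \<kappa> (dist a b)"
    using Psi_midpoint[OF g] by (simp add: c_def)
  ultimately show ?thesis unfolding a_def b_def by argo
qed

text \<open>Psi along the resolvent path is nondecreasing, so if it is bounded it converges, and
  the midpoint gaps between resolvents are controlled by its increments.\<close>
lemma resolvent_converges:
  assumes bdd: "bdd_above ((\<lambda>l. Psi \<kappa> x (resolvent \<kappa> f l x)) ` {0<..})"
  shows "\<exists>z. ((\<lambda>l. resolvent \<kappa> f l x) \<longlongrightarrow> z) at_top"
proof (rule tendsto_if_cauchy)
  define P where "P l = Psi \<kappa> x (resolvent \<kappa> f l x)" for l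
  define L where "L = (SUP l\<in>{0<..}. P l)"
  have P_le_L: "P l \<le> L" if "0 < l" for l
    unfolding L_def P_def using that bdd by (intro cSUP_upper) auto
  fix e :: real assume "e > 0"
  then obtain \<delta> where \<delta>: "\<delta> > 0" "\<And>y z::'a. midpoint_gap \<kappa> (dist y z) < \<delta> \<Longrightarrow> dist y z < e"
    using midpoint_gap_modulus by blast
  have "L - 2 * \<delta> < L" using \<delta>(1) by simp
  then obtain l0 where l0: "0 < l0" "L - 2 * \<delta> < P l0"
    unfolding L_def using bdd by (subst (asm) less_cSUP_iff) (auto simp: P_def)
  have close: "dist (resolvent \<kappa> f l x) (resolvent \<kappa> f m x) < e" if "l0 \<le> l" "l \<le> m" for l m
  proof (rule \<delta>(2))
    have l: "0 < l" using l0(1) that by linarith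
    have "P l0 \<le> P l" "P m \<le> L"
      using resolvent_mono(1) resolvent_finite l0(1) that P_le_L unfolding P_def
      by (metis order_less_le_trans)+
    thus "midpoint_gap \<kappa> (dist (resolvent \<kappa> f l x) (resolvent \<kappa> f m x)) < \<delta>"
      using resolvent_midpoint_gap[OF l \<open>l \<le> m\<close>, of x] l0(2) unfolding P_def by argo
  qed
  show "\<exists>Q. eventually Q at_top \<and>
      (\<forall>l m. Q l \<and> Q m \<longrightarrow> dist (resolvent \<kappa> f l x) (resolvent \<kappa> f m x) < e)"
  proof (intro exI[of _ "\<lambda>l. l0 \<le> l"] conjI allI impI)
    fix l m assume "l0 \<le> l \<and> l0 \<le> m"
    thus "dist (resolvent \<kappa> f l x) (resolvent \<kappa> f m x) < e"
      using close[of l m] close[of m l] by (metis dist_commute linorder_le_cases)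
  qed (rule eventually_ge_at_top)
qed simp

lemma resolvent_limit_minimizes:
  assumes lim: "((\<lambda>l. resolvent \<kappa> f l x) \<longlongrightarrow> z) at_top"
  shows "f z \<le> f w"
proof (cases "f w")
  case (real c)
  have "eventually (\<lambda>l. f (resolvent \<kappa> f l x) \<le> ereal (c + Psi \<kappa> x w / l)) at_top"
  proof (rule eventually_mono[OF eventually_gt_at_top[of 0]])
    fix l :: real assume l: "0 < l"
    then obtain r where r: "f (resolvent \<kappa> f l x) = ereal r" using resolvent_finite by blast
    have "0 \<le> Psi \<kappa> x (resolvent \<kappa> f l x) / l" using Psi_nonneg l by simp
    thus "f (resolvent \<kappa> f l x) \<le> ereal (c + Psi \<kappa> x w / l)"
      using resolvent_le[OF l r real] r by simp
  qed
  hence "Liminf at_top (\<lambda>l. f (resolvent \<kappa> f l x)) \<le> Liminf at_top (\<lambda>l. ereal (c + Psi \<kappa> x w / l))"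
    by (rule Liminf_mono)
  also have "\<dots> = ereal c"
  proof (intro lim_imp_Liminf tendsto_ereal)
    have "((\<lambda>l. Psi \<kappa> x w / l) \<longlongrightarrow> 0) at_top"
      by (intro tendsto_divide_0[OF tendsto_const] filterlim_at_top_imp_at_infinity filterlim_ident)
    thus "((\<lambda>l. c + Psi \<kappa> x w / l) \<longlongrightarrow> c) at_top"
      using tendsto_add[OF tendsto_const, of _ 0 at_top c] by simp
  qed simp
  finally show ?thesis using lsc_le_Liminf[OF lsc lim] real by simp
qed (use proper in \<open>auto simp: proper_fun_def\<close>)

text \<open>By monotonicity of Psi along the path, every resolvent is at least as close to x as the
  resolvents far out in the sequence.\<close>
lemma Psi_resolvent_bounded:
  assumes lam_pos: "\<And>n. lam n > 0" and lam: "filterlim lam at_top sequentially"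
    and lim: "limsup (\<lambda>n. ereal (dist x (resolvent \<kappa> f (lam n) x))) < ereal (pi / (2 * sqrt \<kappa>))"
  shows "bdd_above ((\<lambda>l. Psi \<kappa> x (resolvent \<kappa> f l x)) ` {0<..})"
proof -
  obtain r where r: "limsup (\<lambda>n. ereal (dist x (resolvent \<kappa> f (lam n) x))) < ereal r"
    "r < pi / (2 * sqrt \<kappa>)"
    using ereal_dense2[OF lim] by (auto simp del: ereal_less_eq)
  have ev: "eventually (\<lambda>n. l \<le> lam n \<and> dist x (resolvent \<kappa> f (lam n) x) < r) sequentially" for l
    using Limsup_lessD[OF r(1)] lam by (auto simp: filterlim_at_top intro: eventually_conj)
  have "dist x (resolvent \<kappa> f l x) < r" if l: "0 < l" for l
  proof -
    obtain n where n: "l \<le> lam n" "dist x (resolvent \<kappa> f (lam n) x) < r"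
      using eventually_happens'[OF _ ev[of l]] by auto
    have "Psi \<kappa> x (resolvent \<kappa> f l x) \<le> Psi \<kappa> x (resolvent \<kappa> f (lam n) x)"
      using resolvent_mono(1) resolvent_finite l n(1) by (metis order_less_le_trans)
    hence "dist x (resolvent \<kappa> f l x) \<le> dist x (resolvent \<kappa> f (lam n) x)"
      using Psi_strict_mono by (meson not_le)
    thus ?thesis using n(2) by simp
  qed
  moreover have "sqrt \<kappa> * r < pi / 2" using r(2) kappa_pos by (simp add: field_simps)
  ultimately have bound:
      "Psi \<kappa> x (resolvent \<kappa> f l x) \<le> (1 / cos (sqrt \<kappa> * r) - cos (sqrt \<kappa> * r)) / \<kappa>"
    if "0 < l" for l
    using sec_minus_cos_strict_mono[of "sqrt \<kappa> * dist x (resolvent \<kappa> f l x)" "sqrt \<kappa> * r"] that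
      kappa_pos angle_nonneg by (simp add: Psi_eq divide_right_mono less_imp_le)
  show ?thesis by (rule bdd_aboveI2) (use bound in auto)
qed

end

theorem mainTheorem4:
  fixes \<kappa> :: real and f :: "'a::complete_space \<Rightarrow> ereal" and x :: 'a
    and lam :: "nat \<Rightarrow> real"
  assumes "\<kappa> > 0"
    and "CAT \<kappa> TYPE('a)"
    and "\<forall>v w::'a. dist v w < pi / (2 * sqrt \<kappa>)"
    and "proper_fun f" and "geod_convex f" and "lsc f"
    and "\<forall>n. lam n > 0"
    and "filterlim lam at_top sequentially"
    and "limsup (\<lambda>n. ereal (dist x (resolvent \<kappa> f (lam n) x))) < ereal (pi / (2 * sqrt \<kappa>))"
  shows "\<exists>z. (\<forall>w. f z \<le> f w) \<and> ((\<lambda>l. resolvent \<kappa> f l x) \<longlongrightarrow> z) at_top"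
proof -
  interpret CAT_convex \<kappa> f
    using assms(1-6) by unfold_locales auto
  have "bdd_above ((\<lambda>l. Psi \<kappa> x (resolvent \<kappa> f l x)) ` {0<..})"
    using assms(7-9) by (intro Psi_resolvent_bounded) auto
  then obtain z where "((\<lambda>l. resolvent \<kappa> f l x) \<longlongrightarrow> z) at_top"
    using resolvent_converges by blast
  thus ?thesis using resolvent_limit_minimizes by blast
qed

end
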